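(* Let $k$ be a field of characteristic $0$. The operad $\mathcal{P}ost\mathcal{L}ie$ is the Koszul dual operad of the operad $\mathcal{C}om\mathcal{T}rias$: $\mathcal{C}om\mathcal{T}rias^!\cong\mathcal{P}ost\mathcal{L}ie$, under the identification of the linear dual of $*$ with $\circ$ and of the linear dual of $\bullet$ with $[\,,\,]$.
   Context: $\mathcal{C}om\mathcal{T}rias$ is the quadratic operad generated by a binary operation $*$ (no symmetry) and a commutative binary operation $\bullet$, with relations $(x*y)*z=x*(y*z)=x*(z*y)$, $(x\bullet y)\bullet z=x\bullet(y\bullet z)$, $x*(y\bullet z)=x*(y*z)$, $(x\bullet y)*z=x\bullet(y*z)$. $\mathcal{P}ost\mathcal{L}ie$ is the quadratic operad generated by a binary operation $\circ$ and an antisymmetric binary operation $[\,,\,]$, with relations: Jacobi for $[\,,\,]$, $(x\circ y)\circ z-x\circ(y\circ z)-(x\circ z)\circ y+x\circ(z\circ y)=x\circ[y,z]$, and $[x,y]\circ z=[x\circ z,y]+[x,y\circ z]$. For a quadratic operad $\mathcal F(V)/(R)$, its Koszul dual is $\mathcal F(V^\vee)/(R^\perp)$, where $V^\vee(n)=V(n)^*\otimes\mathrm{sgn}_n$ and $R^\perp$ is the orthogonal of $R$ under the natural pairing between the two-vertex parts of $\mathcal F(V^\vee)$ and $\mathcal F(V)$. *)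

theory Defs
  imports Complex_Main "HOL-Library.Function_Algebras"
begin

text \<open>
  Let V = V(2) be the space of binary generating operations, with a basis indexed by a
  finite type 'g, so V = ('g => 'k).  The S_2-action is given by the matrix M of the
  transposition tau: M g h is the coefficient of e_g in tau(e_h), where
  (tau mu)(x1,x2) = mu(x2,x1).

  The two-vertex (arity 3) part F(V)(3) is identified with 3 copies of V (x) V, using the
  normal-form tree basis  (c,g,h)  =  e_g( e_h(x_a, x_b), x_c ),
  where c is the leaf NOT under the inner vertex and a < b are the other two leaves.
\<close>

datatype leaf = L1 | L2 | L3

lemma leaf_UNIV: "(UNIV :: leaf set) = {L1, L2, L3}"
  using leaf.exhaust by auto

instance leaf :: finite
  by standard (simp add: leaf_UNIV)

fun lnum :: "leaf \<Rightarrow> nat" where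
  "lnum L1 = 1" | "lnum L2 = 2" | "lnum L3 = 3"

type_synonym ('k, 'g) tree3 = "leaf \<times> 'g \<times> 'g \<Rightarrow> 'k"

definition fscale :: "'k::times \<Rightarrow> ('i \<Rightarrow> 'k) \<Rightarrow> ('i \<Rightarrow> 'k)" where
  "fscale c v = (\<lambda>i. c * v i)"

abbreviation lspan :: "('i \<Rightarrow> 'k::field) set \<Rightarrow> ('i \<Rightarrow> 'k) set" where
  "lspan S \<equiv> Modules.module.span fscale S"

definition matact :: "('g \<Rightarrow> 'h::finite \<Rightarrow> 'k::comm_ring_1) \<Rightarrow> ('h \<Rightarrow> 'k) \<Rightarrow> ('g \<Rightarrow> 'k)" where
  "matact P v = (\<lambda>g. \<Sum>h\<in>UNIV. P g h * v h)"

definition ev :: "'g \<Rightarrow> 'g \<Rightarrow> 'k::zero_neq_one" where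
  "ev g = (\<lambda>h. if h = g then 1 else 0)"

text \<open>The tree  mu( nu(x_a, x_b), x_c )  in F(V)(3), for distinct leaves a, b, c
  (rewritten into normal form using the S_2-action M on the inner vertex).\<close>
definition lt :: "('g::finite \<Rightarrow> 'g \<Rightarrow> 'k::comm_ring_1) \<Rightarrow> ('g \<Rightarrow> 'k) \<Rightarrow> ('g \<Rightarrow> 'k)
                 \<Rightarrow> leaf \<Rightarrow> leaf \<Rightarrow> leaf \<Rightarrow> ('k, 'g) tree3" where
  "lt M mu nu a b c =
     (let nu' = (if lnum a < lnum b then nu else matact M nu)
      in (\<lambda>(c', g, h). if c' = c then mu g * nu' h else 0))"

text \<open>The tree  mu( x_a, nu(x_b, x_c) ) = (tau mu)( nu(x_b, x_c), x_a ).\<close>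
definition rt :: "('g::finite \<Rightarrow> 'g \<Rightarrow> 'k::comm_ring_1) \<Rightarrow> ('g \<Rightarrow> 'k) \<Rightarrow> leaf \<Rightarrow> ('g \<Rightarrow> 'k)
                 \<Rightarrow> leaf \<Rightarrow> leaf \<Rightarrow> ('k, 'g) tree3" where
  "rt M mu a nu b c = lt M (matact M mu) nu b c a"

definition distinct3 :: "leaf \<Rightarrow> leaf \<Rightarrow> leaf \<Rightarrow> bool" where
  "distinct3 x y z \<longleftrightarrow> x \<noteq> y \<and> y \<noteq> z \<and> x \<noteq> z"

text \<open>V^dual = V^* (x) sgn: in the dual basis, tau acts by  -M^T.\<close>
definition kd_action :: "('g \<Rightarrow> 'g \<Rightarrow> 'k::comm_ring_1) \<Rightarrow> ('g \<Rightarrow> 'g \<Rightarrow> 'k)" where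
  "kd_action M = (\<lambda>g h. - M h g)"

text \<open>The natural pairing F(V^dual)(3) x F(V)(3) -> k:
  < alpha(beta(x_a,x_b),x_c), mu(nu(x_a,x_b),x_c) > = alpha(mu) beta(nu)
  for the three cyclic shapes (12)3, (23)1, (31)2, and 0 between different shapes.
  In the normal-form basis (a < b) the shape (31)2 is rewritten as (13)2, which
  (because of the sign twist of V^dual) produces the sign -1 for outer leaf L2.\<close>
fun leaf_sign :: "leaf \<Rightarrow> 'k::comm_ring_1" where
  "leaf_sign L1 = 1" | "leaf_sign L2 = -1" | "leaf_sign L3 = 1"

definition kd_pair :: "('k::comm_ring_1, 'g::finite) tree3 \<Rightarrow> ('k, 'g) tree3 \<Rightarrow> 'k" where
  "kd_pair Phi T = (\<Sum>(c, g, h)\<in>UNIV. leaf_sign c * Phi (c, g, h) * T (c, g, h))"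

definition kd_rel :: "('k::comm_ring_1, 'g::finite) tree3 set \<Rightarrow> ('k, 'g) tree3 set" where
  "kd_rel R = {Phi. \<forall>T\<in>R. kd_pair Phi T = 0}"

definition tree_map :: "('g \<Rightarrow> 'h::finite \<Rightarrow> 'k::comm_ring_1) \<Rightarrow> ('k, 'h) tree3 \<Rightarrow> ('k, 'g) tree3" where
  "tree_map P T = (\<lambda>(c, g, h). \<Sum>(g', h')\<in>UNIV. P g g' * P h h' * T (c, g', h'))"

definition quad_iso :: "('h::finite \<Rightarrow> 'h \<Rightarrow> 'k::comm_ring_1) \<Rightarrow> ('k, 'h) tree3 set
      \<Rightarrow> ('g::finite \<Rightarrow> 'g \<Rightarrow> 'k) \<Rightarrow> ('k, 'g) tree3 set \<Rightarrow> ('g \<Rightarrow> 'h \<Rightarrow> 'k) \<Rightarrow> bool" where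
  "quad_iso M1 R1 M2 R2 P \<longleftrightarrow>
     bij (matact P) \<and>
     (\<forall>v. matact P (matact M1 v) = matact M2 (matact P v)) \<and>
     tree_map P ` R1 = R2"

datatype ct_gen = Star | StarOp | Dot
  \<comment> \<open>basis of V(2): x*y, y*x (= tau applied to *), and the commutative x.y\<close>

lemma ct_gen_UNIV: "(UNIV :: ct_gen set) = {Star, StarOp, Dot}"
  using ct_gen.exhaust by auto

instance ct_gen :: finite
  by standard (simp add: ct_gen_UNIV)

fun ct_tau :: "ct_gen \<Rightarrow> ct_gen" where
  "ct_tau Star = StarOp" | "ct_tau StarOp = Star" | "ct_tau Dot = Dot"

definition ct_action :: "ct_gen \<Rightarrow> ct_gen \<Rightarrow> 'k::comm_ring_1" where
  "ct_action g h = (if g = ct_tau h then 1 else 0)"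

definition ct_rels :: "('k::comm_ring_1, ct_gen) tree3 set" where
  "ct_rels = (let M = ct_action; s = ev Star; d = ev Dot in
     {r. \<exists>x y z. distinct3 x y z \<and>
       (r = lt M s s x y z - rt M s x s y z \<comment> \<open>(x*y)*z = x*(y*z)\<close>
      \<or> r = rt M s x s y z - rt M s x s z y \<comment> \<open>x*(y*z) = x*(z*y)\<close>
      \<or> r = lt M d d x y z - rt M d x d y z \<comment> \<open>(x.y).z = x.(y.z)\<close>
      \<or> r = rt M s x d y z - rt M s x s y z \<comment> \<open>x*(y.z) = x*(y*z)\<close>
      \<or> r = lt M s d x y z - rt M d x s y z \<comment> \<open>(x.y)*z = x.(y*z)\<close>)})"

datatype pl_gen = Circ | CircOp | Br
  \<comment> \<open>basis of V(2): x o y, y o x, and the antisymmetric [x,y]\<close>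

lemma pl_gen_UNIV: "(UNIV :: pl_gen set) = {Circ, CircOp, Br}"
  using pl_gen.exhaust by auto

instance pl_gen :: finite
  by standard (simp add: pl_gen_UNIV)

definition pl_action :: "pl_gen \<Rightarrow> pl_gen \<Rightarrow> 'k::comm_ring_1" where
  "pl_action g h = (case h of
      Circ \<Rightarrow> (if g = CircOp then 1 else 0)
    | CircOp \<Rightarrow> (if g = Circ then 1 else 0)
    | Br \<Rightarrow> (if g = Br then -1 else 0))"

definition pl_rels :: "('k::comm_ring_1, pl_gen) tree3 set" where
  "pl_rels = (let M = pl_action; c = ev Circ; b = ev Br in
     {r. \<exists>x y z. distinct3 x y z \<and>
       (r = lt M b b x y z + lt M b b y z x + lt M b b z x y \<comment> \<open>Jacobi\<close>
      \<or> r = lt M c c x y z - rt M c x c y z - lt M c c x z y + rt M c x c z y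
             - rt M c x b y z
             \<comment> \<open>(x o y) o z - x o (y o z) - (x o z) o y + x o (z o y) = x o [y,z], with c = o\<close>
      \<or> r = lt M c b x y z - lt M b c x z y - rt M b x c y z
             \<comment> \<open>[x,y] o z = [x o z, y] + [x, y o z]\<close>)})"

text \<open>o  |->  dual of *;  [,]  |->  dual of . ; by S_2-equivariance (V^dual carries the
  sign-twisted action) y o x = tau(o) |-> tau^dual(dual of * ) = - (dual of y*x).\<close>
definition ident :: "ct_gen \<Rightarrow> pl_gen \<Rightarrow> 'k::comm_ring_1" where
  "ident g h = (case h of
      Circ \<Rightarrow> (if g = Star then 1 else 0)
    | CircOp \<Rightarrow> (if g = StarOp then -1 else 0)
    | Br \<Rightarrow> (if g = Dot then 1 else 0))"

end

theory Submission
  imports Defs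
begin

text \<open>
  In the tree basis of F(V)(3), each ComTrias relation pairs with an element of F(V^dual)(3)
  to a combination of just two of its 27 coordinates.  Hence R^perp is cut out by twenty
  equations expressing every coordinate as plus or minus one of seven free coordinates, so it
  is 7-dimensional.  The images of the PostLie relations satisfy these equations, and seven of
  them have the unit vectors as their free coordinates; therefore they span R^perp.
\<close>

interpretation fscale: module "fscale :: 'k::comm_ring_1 \<Rightarrow> ('i \<Rightarrow> 'k) \<Rightarrow> ('i \<Rightarrow> 'k)"
  by unfold_locales (auto simp: fscale_def fun_eq_iff algebra_simps)

lemma module_hom_tree_map: "module_hom fscale fscale (tree_map P)"
proof -
  have "tree_map P (T + U) = tree_map P T + tree_map P U" for T U
    by (auto simp: tree_map_def fun_eq_iff sum.distrib distrib_left case_prod_beta)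
  moreover have "tree_map P (fscale c T) = fscale c (tree_map P T)" for c T
    by (simp add: tree_map_def fscale_def fun_eq_iff sum_distrib_left mult_ac case_prod_beta)
  ultimately show ?thesis
    by (simp add: module_hom_iff fscale.module_axioms)
qed

lemma kd_pair_add_left: "kd_pair (Phi + Psi) T = kd_pair Phi T + kd_pair Psi T"
  by (simp add: kd_pair_def sum.distrib algebra_simps case_prod_beta)

lemma kd_pair_add_right: "kd_pair Phi (T + U) = kd_pair Phi T + kd_pair Phi U"
  by (simp add: kd_pair_def sum.distrib algebra_simps case_prod_beta)

lemma kd_pair_fscale_left: "kd_pair (fscale c Phi) T = c * kd_pair Phi T"
  by (simp add: kd_pair_def fscale_def sum_distrib_left mult_ac case_prod_beta)

lemma kd_pair_fscale_right: "kd_pair Phi (fscale c T) = c * kd_pair Phi T"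
  by (simp add: kd_pair_def fscale_def sum_distrib_left mult_ac case_prod_beta)

lemma kd_pair_zero_left: "kd_pair 0 T = 0"
  by (simp add: kd_pair_def case_prod_beta)

lemma kd_pair_zero_right: "kd_pair Phi 0 = 0"
  by (simp add: kd_pair_def case_prod_beta)

lemma subspace_kd_rel: "fscale.subspace (kd_rel S)"
  by (simp add: fscale.subspace_def kd_rel_def kd_pair_add_left kd_pair_fscale_left
      kd_pair_zero_left)

lemma kd_rel_span: "kd_rel (fscale.span S) = kd_rel S"
proof
  show "kd_rel (fscale.span S) \<subseteq> kd_rel S"
    using fscale.span_superset by (auto simp: kd_rel_def)
  show "kd_rel S \<subseteq> kd_rel (fscale.span S)"
  proof
    fix Phi assume "Phi \<in> kd_rel S"
    moreover have "fscale.subspace {T. kd_pair Phi T = 0}"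
      by (simp add: fscale.subspace_def kd_pair_add_right kd_pair_fscale_right
          kd_pair_zero_right)
    ultimately have "fscale.span S \<subseteq> {T. kd_pair Phi T = 0}"
      by (intro fscale.span_minimal) (auto simp: kd_rel_def)
    then show "Phi \<in> kd_rel (fscale.span S)"
      by (auto simp: kd_rel_def)
  qed
qed

lemma sum_UNIV_prod: "(\<Sum>x\<in>UNIV. f x) = (\<Sum>a\<in>UNIV. \<Sum>b\<in>UNIV. f (a, b))"
  by (simp add: sum.cartesian_product UNIV_Times_UNIV[symmetric] case_prod_beta'
      del: UNIV_Times_UNIV)

lemmas coordinate_simps = sum_UNIV_prod leaf_UNIV ct_gen_UNIV pl_gen_UNIV
  kd_pair_def tree_map_def lt_def rt_def matact_def ev_def ct_action_def pl_action_def ident_def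

lemma bij_matact_ident: "bij (matact (ident :: ct_gen \<Rightarrow> pl_gen \<Rightarrow> 'k::comm_ring_1))"
proof (rule o_bij)
  define G :: "(ct_gen \<Rightarrow> 'k) \<Rightarrow> pl_gen \<Rightarrow> 'k" where
    "G = (\<lambda>w h. case h of Circ \<Rightarrow> w Star | CircOp \<Rightarrow> - w StarOp | Br \<Rightarrow> w Dot)"
  show "G \<circ> matact ident = id"
    by (auto simp: fun_eq_iff G_def coordinate_simps split: pl_gen.split)
  show "matact ident \<circ> G = id"
  proof (intro ext)
    fix w g show "(matact ident \<circ> G) w g = id w g"
      by (cases g) (simp_all add: G_def coordinate_simps)
  qed
qed

lemma matact_ident_equivariant:
  "matact (ident :: ct_gen \<Rightarrow> pl_gen \<Rightarrow> 'k::comm_ring_1) (matact pl_action v)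
    = matact (kd_action ct_action) (matact ident v)"
proof (rule ext)
  fix g show "matact (ident :: ct_gen \<Rightarrow> pl_gen \<Rightarrow> 'k) (matact pl_action v) g
      = matact (kd_action ct_action) (matact ident v) g"
    by (cases g) (simp_all add: coordinate_simps kd_action_def)
qed

definition ct_assoc :: "leaf \<Rightarrow> leaf \<Rightarrow> leaf \<Rightarrow> ('k::comm_ring_1, ct_gen) tree3" where
  "ct_assoc x y z = lt ct_action (ev Star) (ev Star) x y z - rt ct_action (ev Star) x (ev Star) y z"

definition ct_right_comm :: "leaf \<Rightarrow> leaf \<Rightarrow> leaf \<Rightarrow> ('k::comm_ring_1, ct_gen) tree3" where
  "ct_right_comm x y z = rt ct_action (ev Star) x (ev Star) y z - rt ct_action (ev Star) x (ev Star) z y"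

definition ct_dot_assoc :: "leaf \<Rightarrow> leaf \<Rightarrow> leaf \<Rightarrow> ('k::comm_ring_1, ct_gen) tree3" where
  "ct_dot_assoc x y z = lt ct_action (ev Dot) (ev Dot) x y z - rt ct_action (ev Dot) x (ev Dot) y z"

definition ct_star_dot :: "leaf \<Rightarrow> leaf \<Rightarrow> leaf \<Rightarrow> ('k::comm_ring_1, ct_gen) tree3" where
  "ct_star_dot x y z = rt ct_action (ev Star) x (ev Dot) y z - rt ct_action (ev Star) x (ev Star) y z"

definition ct_dot_star :: "leaf \<Rightarrow> leaf \<Rightarrow> leaf \<Rightarrow> ('k::comm_ring_1, ct_gen) tree3" where
  "ct_dot_star x y z = lt ct_action (ev Star) (ev Dot) x y z - rt ct_action (ev Dot) x (ev Star) y z"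

lemma ct_rels_eq:
  "ct_rels = {r. \<exists>x y z. distinct3 x y z \<and>
     (r = ct_assoc x y z \<or> r = ct_right_comm x y z \<or> r = ct_dot_assoc x y z
      \<or> r = ct_star_dot x y z \<or> r = ct_dot_star x y z)}"
  unfolding ct_rels_def Let_def ct_assoc_def ct_right_comm_def ct_dot_assoc_def ct_star_dot_def
    ct_dot_star_def ..

definition pl_jacobi :: "leaf \<Rightarrow> leaf \<Rightarrow> leaf \<Rightarrow> ('k::comm_ring_1, pl_gen) tree3" where
  "pl_jacobi x y z = lt pl_action (ev Br) (ev Br) x y z + lt pl_action (ev Br) (ev Br) y z x
     + lt pl_action (ev Br) (ev Br) z x y"

definition pl_assoc :: "leaf \<Rightarrow> leaf \<Rightarrow> leaf \<Rightarrow> ('k::comm_ring_1, pl_gen) tree3" where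
  "pl_assoc x y z = lt pl_action (ev Circ) (ev Circ) x y z - rt pl_action (ev Circ) x (ev Circ) y z
     - lt pl_action (ev Circ) (ev Circ) x z y + rt pl_action (ev Circ) x (ev Circ) z y
     - rt pl_action (ev Circ) x (ev Br) y z"

definition pl_derivation :: "leaf \<Rightarrow> leaf \<Rightarrow> leaf \<Rightarrow> ('k::comm_ring_1, pl_gen) tree3" where
  "pl_derivation x y z = lt pl_action (ev Circ) (ev Br) x y z - lt pl_action (ev Br) (ev Circ) x z y
     - rt pl_action (ev Br) x (ev Circ) y z"

lemma pl_rels_eq:
  "pl_rels = {r. \<exists>x y z. distinct3 x y z \<and>
     (r = pl_jacobi x y z \<or> r = pl_assoc x y z \<or> r = pl_derivation x y z)}"
  unfolding pl_rels_def Let_def pl_jacobi_def pl_assoc_def pl_derivation_def ..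

lemmas relation_defs = ct_assoc_def ct_right_comm_def ct_dot_assoc_def ct_star_dot_def
  ct_dot_star_def pl_jacobi_def pl_assoc_def pl_derivation_def

definition comtrias_perp_eqs :: "('k::comm_ring_1, ct_gen) tree3 \<Rightarrow> bool" where
  "comtrias_perp_eqs Phi \<longleftrightarrow>
    Phi (L2, StarOp, StarOp) = - Phi (L1, Star, Star) \<and>
    Phi (L2, StarOp, Star) = - Phi (L1, Star, Star) \<and>
    Phi (L2, StarOp, Dot) = - Phi (L1, Star, Star) \<and>
    Phi (L3, Star, StarOp) = Phi (L1, Star, Star) \<and>
    Phi (L3, StarOp, StarOp) = Phi (L1, Star, StarOp) \<and>
    Phi (L3, StarOp, Star) = Phi (L1, Star, StarOp) \<and>
    Phi (L3, StarOp, Dot) = Phi (L1, Star, StarOp) \<and>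
    Phi (L2, Star, StarOp) = - Phi (L1, Star, StarOp) \<and>
    Phi (L2, Dot, StarOp) = - Phi (L1, Star, Dot) \<and>
    Phi (L3, Dot, StarOp) = Phi (L1, Star, Dot) \<and>
    Phi (L3, Star, Star) = Phi (L1, StarOp, Star) \<and>
    Phi (L1, StarOp, StarOp) = Phi (L1, StarOp, Star) \<and>
    Phi (L1, StarOp, Dot) = Phi (L1, StarOp, Star) \<and>
    Phi (L2, Star, Star) = - Phi (L1, StarOp, Star) \<and>
    Phi (L3, Star, Dot) = Phi (L1, Dot, Star) \<and>
    Phi (L2, Dot, Star) = - Phi (L1, Dot, Star) \<and>
    Phi (L2, Star, Dot) = - Phi (L1, Dot, StarOp) \<and>
    Phi (L3, Dot, Star) = Phi (L1, Dot, StarOp) \<and>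
    Phi (L3, Dot, Dot) = Phi (L1, Dot, Dot) \<and>
    Phi (L2, Dot, Dot) = - Phi (L1, Dot, Dot)"

lemma comtrias_perp_eqs_if_orthogonal:
  fixes Phi :: "('k::comm_ring_1, ct_gen) tree3"
  assumes "Phi \<in> kd_rel ct_rels"
  shows "comtrias_perp_eqs Phi"
proof -
  have "kd_pair Phi (ct_assoc x y z) = 0" "kd_pair Phi (ct_right_comm x y z) = 0"
    "kd_pair Phi (ct_dot_assoc x y z) = 0" "kd_pair Phi (ct_star_dot x y z) = 0"
    "kd_pair Phi (ct_dot_star x y z) = 0" if "distinct3 x y z" for x y z
    using assms that by (auto simp: kd_rel_def ct_rels_eq)
  from this[of L1 L2 L3] this[of L1 L3 L2] this[of L2 L1 L3] this[of L2 L3 L1]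
    this[of L3 L1 L2] this[of L3 L2 L1]
  show ?thesis
    unfolding comtrias_perp_eqs_def
    by (simp add: coordinate_simps relation_defs distinct3_def algebra_simps)
      (metis add_eq_0_iff2 minus_minus)
qed

lemma orthogonal_if_comtrias_perp_eqs:
  fixes Phi :: "('k::comm_ring_1, ct_gen) tree3"
  assumes "comtrias_perp_eqs Phi"
  shows "Phi \<in> kd_rel ct_rels"
  unfolding kd_rel_def
proof (intro CollectI ballI)
  fix T :: "('k, ct_gen) tree3"
  assume "T \<in> ct_rels"
  then obtain x y z where "distinct3 x y z" and
    "T = ct_assoc x y z \<or> T = ct_right_comm x y z \<or> T = ct_dot_assoc x y z
      \<or> T = ct_star_dot x y z \<or> T = ct_dot_star x y z"
    by (auto simp: ct_rels_eq)
  then show "kd_pair Phi T = 0"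
    using assms unfolding comtrias_perp_eqs_def distinct3_def
    by (cases x; cases y; cases z) (auto simp: coordinate_simps relation_defs)
qed

lemma comtrias_perp_eqs_tree_map_pl_rels:
  fixes r :: "('k::comm_ring_1, pl_gen) tree3"
  assumes "r \<in> pl_rels"
  shows "comtrias_perp_eqs (tree_map ident r)"
proof -
  obtain x y z where "distinct3 x y z" and
    "r = pl_jacobi x y z \<or> r = pl_assoc x y z \<or> r = pl_derivation x y z"
    using assms by (auto simp: pl_rels_eq)
  then show ?thesis
    unfolding comtrias_perp_eqs_def distinct3_def
    by (cases x; cases y; cases z) (auto simp: coordinate_simps relation_defs)
qed

lemma span_pl_rels_image_eq_kd_rel:
  "lspan (tree_map ident ` pl_rels) = kd_rel (ct_rels :: ('k::field, ct_gen) tree3 set)"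
proof
  show "lspan (tree_map ident ` pl_rels) \<subseteq> kd_rel (ct_rels :: ('k, ct_gen) tree3 set)"
    using comtrias_perp_eqs_tree_map_pl_rels orthogonal_if_comtrias_perp_eqs
    by (intro fscale.span_minimal subspace_kd_rel) blast
next
  show "kd_rel ct_rels \<subseteq> lspan (tree_map (ident :: ct_gen \<Rightarrow> pl_gen \<Rightarrow> 'k) ` pl_rels)"
  proof
    fix Phi :: "('k, ct_gen) tree3"
    assume "Phi \<in> kd_rel ct_rels"
    then have eqs: "comtrias_perp_eqs Phi"
      by (rule comtrias_perp_eqs_if_orthogonal)
    let ?img = "\<lambda>r. tree_map ident r :: ('k, ct_gen) tree3"
    have rels: "pl_jacobi L1 L2 L3 \<in> pl_rels" "pl_assoc L1 L2 L3 \<in> pl_rels"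
      "pl_assoc L2 L3 L1 \<in> pl_rels" "pl_assoc L3 L1 L2 \<in> pl_rels"
      "pl_derivation L1 L2 L3 \<in> pl_rels" "pl_derivation L2 L3 L1 \<in> pl_rels"
      "pl_derivation L3 L1 L2 \<in> pl_rels"
      by (auto simp: pl_rels_eq distinct3_def)
    \<comment> \<open>the free coordinates of these seven images form the identity matrix\<close>
    have "Phi = fscale (Phi (L1, Star, Star)) (?img (pl_assoc L2 L3 L1))
        + fscale (Phi (L1, Star, StarOp)) (?img (pl_assoc L3 L1 L2))
        + fscale (Phi (L1, Star, Dot)) (?img (pl_derivation L2 L3 L1))
        + fscale (Phi (L1, StarOp, Star)) (?img (pl_assoc L1 L2 L3))
        + fscale (Phi (L1, Dot, Star)) (?img (pl_derivation L1 L2 L3))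
        + fscale (Phi (L1, Dot, StarOp)) (?img (pl_derivation L3 L1 L2))
        + fscale (Phi (L1, Dot, Dot)) (?img (pl_jacobi L1 L2 L3))"
      (is "Phi = ?combination")
    proof (rule ext, clarify)
      fix c g h
      show "Phi (c, g, h) = ?combination (c, g, h)"
        using eqs unfolding comtrias_perp_eqs_def
        by (cases c; cases g; cases h) (simp_all add: coordinate_simps relation_defs fscale_def)
    qed
    also have "?combination \<in> lspan (tree_map ident ` pl_rels)"
      by (intro fscale.span_add fscale.span_scale fscale.span_base imageI rels)
    finally show "Phi \<in> lspan (tree_map ident ` pl_rels)" .
  qed
qed

theorem mainTheorem14:
  "quad_iso (pl_action :: pl_gen \<Rightarrow> pl_gen \<Rightarrow> 'k::field_char_0) (lspan pl_rels)
            (kd_action ct_action) (kd_rel (lspan ct_rels)) ident"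
  unfolding quad_iso_def
proof (intro conjI allI)
  show "bij (matact (ident :: ct_gen \<Rightarrow> pl_gen \<Rightarrow> 'k))"
    by (rule bij_matact_ident)
  show "matact ident (matact pl_action v)
      = matact (kd_action ct_action) (matact (ident :: ct_gen \<Rightarrow> pl_gen \<Rightarrow> 'k) v)" for v
    by (rule matact_ident_equivariant)
  have "tree_map ident ` lspan pl_rels = lspan (tree_map (ident :: ct_gen \<Rightarrow> pl_gen \<Rightarrow> 'k) ` pl_rels)"
    by (rule module_hom.span_image[OF module_hom_tree_map, symmetric])
  also have "\<dots> = kd_rel ct_rels"
    by (rule span_pl_rels_image_eq_kd_rel)
  also have "\<dots> = kd_rel (lspan ct_rels)"
    by (rule kd_rel_span[symmetric])
  finally show "tree_map ident ` lspan pl_rels = kd_rel (lspan (ct_rels :: ('k, ct_gen) tree3 set))" .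
qed

end
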